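(* Let $\theta_1,\theta_2>0$, $\theta=\theta_1+\theta_2$, $p=\theta_1/\theta$, $\beta>0$, $\phi=\theta/\beta$, and let $r_1,r_2=\frac12\big(1-\phi\pm\sqrt{(1-\phi)^2+4\phi p}\big)$ (so $0<r_1<1$, $r_2<0$). Let $a=(r_1-r_2)/2>0$, $b=(1-r_1)/(1-r_2)\in(0,1)$, $c=-r_1/r_2>0$. Let \[ \mu(t)=r_1+(r_1-r_2)\frac{b\,e^{-\beta(r_1-r_2)t/2}}{1-b\,e^{-\beta(r_1-r_2)t/2}},\qquad \nu(t)=r_1+(r_1-r_2)\frac{\frac{r_1}{r_2}e^{-\beta(r_1-r_2)t/2}}{1-\frac{r_1}{r_2}e^{-\beta(r_1-r_2)t/2}}, \] and let $p_{11}=\mathbb{E}[\mu(\tau)]$, $p_{21}=\mathbb{E}[\nu(\tau)]$ with $\tau$ exponential of rate 1. Then \[ p_{11}=r_1+2b^{-1/(a\beta)}\beta^{-1}\int_0^by^{1/(a\beta)}(1-y)^{-1}dy=r_1+2\beta^{-1}\sum_{k=0}^\infty\frac{b^{k+1}}{1/(a\beta)+k+1}, \] \begin{align*} p_{21}&=r_1-2c^{-1/(a\beta)}\beta^{-1}\int_0^{c/(1+c)}y^{1/(a\beta)}(1-y)^{-1/(a\beta)-1}dy\\ &=r_1-2c^{-1/(a\beta)}\beta^{-1}\sum_{k=0}^\infty\frac{\big((a\beta+1)/(a\beta)\big)_{(k)}}{k!}\frac{\big(c/(1+c)\big)^{1/(a\beta)+k+1}}{1/(a\beta)+k+1}, \end{align*}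 where $a_{(k)}=a(a+1)\cdots(a+k-1)$.
   Context: $\mu(t)$ and $\nu(t)$ are the solutions of $\dot\chi=\tfrac12(\theta_1-\theta\chi)+\tfrac12\beta\chi(1-\chi)$ with $\chi(0)=1$ and $\chi(0)=0$ respectively; $p_{11},p_{21}$ are the entries of the transition matrix between the types of successive whole-population replacements in the star-shaped Fleming–Viot model with mutation and selection. *)

theory Defs
  imports "HOL-Probability.Probability"
begin

end

theory Submission
  imports Defs
begin

text \<open>Since $\tau$ is exponential, $p_{11} - r_1$ and $p_{21} - r_1$ are integrals
  $\int_0^\infty e^{-t} h(t)\,dt$ of profiles $h(t) = K \kappa e^{-st} / (1 - \kappa e^{-st})$ with
  $s = a\beta$, where $\kappa = b \in (0,1)$ for $\mu$ and $\kappa = r_1/r_2 = -c < 0$ for $\nu$.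
  The substitutions $y = b e^{-st}$ and $y = c e^{-st} / (1 + c e^{-st})$ turn them into incomplete
  beta integrals $\int_0^x y^q (1-y)^{-\alpha}\,dy$; expanding $(1-y)^{-\alpha}$ in its binomial
  series, whose coefficients are nonnegative, and integrating term by term (monotone convergence)
  gives the series.\<close>

lemma set_integrable_Ioo_bounded:
  fixes f :: "real \<Rightarrow> real"
  assumes "f \<in> borel_measurable borel" and "\<And>y. l < y \<Longrightarrow> y < u \<Longrightarrow> \<bar>f y\<bar> \<le> B"
  shows "set_integrable lborel {l<..<u} f"
  unfolding set_integrable_def
  by (rule integrableI_bounded_set_indicator[where B=B])
     (use assms emeasure_bounded_finite[of "{l<..<u}"] in auto)

lemma binomial_series_pochhammer:
  fixes \<alpha> y :: real
  assumes "\<bar>y\<bar> < 1"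
  shows "(\<lambda>k. pochhammer \<alpha> k / fact k * y ^ k) sums (1 - y) powr (-\<alpha>)"
proof -
  have "((- \<alpha>) gchoose k) * (- y) ^ k = pochhammer \<alpha> k / fact k * y ^ k" for k
  proof -
    have "(- 1 :: real) ^ k * (- 1) ^ k = 1"
      by (simp add: power_mult_distrib[symmetric])
    then show ?thesis
      by (simp add: gbinomial_pochhammer power_minus[of y k] mult_ac)
  qed
  with gen_binomial_real[of "- y" "- \<alpha>"] assms show ?thesis by simp
qed

lemma filterlim_ln_plus_at_bot:
  fixes f :: "real \<Rightarrow> real"
  assumes "(f \<longlongrightarrow> L) (at_right 0)" and "0 < s"
  shows "filterlim (\<lambda>y. (f y + ln y) / s) at_bot (at_right 0)"
proof -
  have lim: "filterlim (\<lambda>y. f y + ln y) at_bot (at_right 0)"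
    using filterlim_tendsto_add_at_bot_iff[OF assms(1), of ln] ln_at_0 by simp
  have "filterlim (\<lambda>y. (1/s) * (f y + ln y)) at_bot (at_right 0)"
    by (rule filterlim_tendsto_pos_mult_at_bot[OF tendsto_const _ lim]) (use assms(2) in simp)
  then show ?thesis by (simp add: field_simps)
qed

lemma expectation_exponential_affine:
  fixes h :: "real \<Rightarrow> real" and M :: "'s measure" and tau :: "'s \<Rightarrow> real"
  assumes "prob_space M" and tau: "distributed M lborel tau (exponential_density 1)"
    and h_meas: "h \<in> borel_measurable borel"
    and h_int: "set_integrable lborel {0<..} (\<lambda>t. exp (-t) * h t)"
  shows "prob_space.expectation M (\<lambda>\<omega>. r + k * h (tau \<omega>))
           = r + k * (LBINT t=0..\<infinity>. exp (-t) * h t)"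
proof -
  interpret prob_space M by fact
  let ?D = "exponential_density (1::real)"
  have D_nonneg: "\<And>x. 0 \<le> ?D x" by (simp add: exponential_density_nonneg)
  have D_integrable: "integrable lborel (\<lambda>x. ?D x * 1)"
    by (subst distributed_integrable[OF tau]) (use D_nonneg in auto)
  have D_total: "(\<integral>x. ?D x * 1 \<partial>lborel) = 1"
    by (subst distributed_integral[OF tau]) (use D_nonneg prob_space in auto)
  have D_ae: "AE x in lborel. ?D x * h x = indicator {0<..} x * (exp (-x) * h x)"
    using AE_lborel_singleton[of 0] by eventually_elim (auto simp: exponential_density_def indicator_def)
  have Dh_integrable: "integrable lborel (\<lambda>x. ?D x * h x)"
    by (rule integrable_cong_AE[THEN iffD2, OF _ _ D_ae]) (use h_int h_meas in \<open>auto simp: set_integrable_def\<close>)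
  have Dh_integral: "(\<integral>x. ?D x * h x \<partial>lborel) = (LBINT t=0..\<infinity>. exp (-t) * h t)"
    by (subst integral_cong_AE[OF _ _ D_ae])
       (use h_meas in \<open>auto simp: interval_lebesgue_integral_0_infty set_lebesgue_integral_def\<close>)
  have "expectation (\<lambda>\<omega>. r + k * h (tau \<omega>)) = (\<integral>x. ?D x * (r + k * h x) \<partial>lborel)"
    by (rule distributed_integral[symmetric, OF tau]) (use h_meas D_nonneg in auto)
  also have "\<dots> = (\<integral>x. r * (?D x * 1) + k * (?D x * h x) \<partial>lborel)"
    by (simp add: algebra_simps)
  also have "\<dots> = r * (\<integral>x. ?D x * 1 \<partial>lborel) + k * (\<integral>x. ?D x * h x \<partial>lborel)"
    using D_integrable Dh_integrable by simp
  finally show ?thesis using D_total Dh_integral by simp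
qed

lemma laplace_integral_substitution:
  fixes h G g F :: "real \<Rightarrow> real" and X :: real
  assumes X: "0 < X"
    and G_deriv: "\<And>y. 0 < y \<Longrightarrow> y < X \<Longrightarrow> DERIV G y :> g y"
    and g_cont: "\<And>y. 0 < y \<Longrightarrow> y < X \<Longrightarrow> isCont g y"
    and g_nonneg: "\<And>y. 0 \<le> y \<Longrightarrow> y \<le> X \<Longrightarrow> 0 \<le> g y"
    and G_neg: "\<And>y. 0 < y \<Longrightarrow> y < X \<Longrightarrow> G y < 0"
    and h_cont: "\<And>t. 0 < t \<Longrightarrow> isCont h t"
    and h_nonneg: "\<And>t. 0 < t \<Longrightarrow> 0 \<le> h t"
    and G_at_0: "filterlim G at_bot (at_right 0)"
    and G_at_X: "(G \<longlongrightarrow> 0) (at_left X)"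
    and F_eq: "\<And>y. 0 < y \<Longrightarrow> y < X \<Longrightarrow> exp (G y) * h (- G y) * g y = F y"
    and F_int: "set_integrable lborel {0<..<X} F"
  shows "set_integrable lborel {0<..} (\<lambda>t. exp (-t) * h t)"
    and "(LBINT t=0..\<infinity>. exp (-t) * h t) = (LBINT y=0..X. F y)"
proof -
  define f where "f = (\<lambda>x. exp x * h (-x))"
  have einterval: "einterval 0 (ereal X) = {0<..<X}"
    by (auto simp: einterval_def zero_ereal_def)
  have f_cont: "isCont f (G y)" if "0 < ereal y" "ereal y < ereal X" for y
  proof -
    have "isCont h (- G y)" using h_cont G_neg that by (simp add: zero_ereal_def)
    then have "isCont (\<lambda>x. h (- x)) (G y)"
      using isCont_o2[where f=uminus and a="G y" and g=h] by (simp add: continuous_intros)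
    then show ?thesis unfolding f_def by (intro continuous_intros)
  qed
  have fG_int: "set_integrable lborel (einterval 0 (ereal X)) (\<lambda>x. f (G x) * g x)"
    unfolding einterval
    by (subst set_integrable_cong[OF refl refl, of _ _ F]) (use F_eq F_int in \<open>auto simp: f_def\<close>)
  have G_at_0': "((ereal \<circ> G \<circ> real_of_ereal) \<longlongrightarrow> - \<infinity>) (at_right 0)"
    using G_at_0 by (simp add: zero_ereal_def ereal_tendsto_simps)
  have G_at_X': "((ereal \<circ> G \<circ> real_of_ereal) \<longlongrightarrow> 0) (at_left (ereal X))"
    using G_at_X by (simp add: zero_ereal_def ereal_tendsto_simps)
  have f_int: "set_integrable lborel (einterval (-\<infinity>) 0) f"
    and f_integral: "(LBINT x=-\<infinity>..0. f x) = (LBINT x=0..ereal X. f (G x) * g x)"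
    using interval_integral_substitution_nonneg[of 0 "ereal X" G g f "-\<infinity>" 0, OF _ _ _ _ _ _
        G_at_0' G_at_X' fG_int] X G_deriv g_cont g_nonneg G_neg h_nonneg f_cont
    by (auto simp: zero_ereal_def f_def)
  have "interval_lebesgue_integrable lborel 0 \<infinity> (\<lambda>x. f (-x))"
    unfolding interval_integrable_mirror using f_int
    by (simp add: interval_lebesgue_integrable_def)
  then show "set_integrable lborel {0<..} (\<lambda>t. exp (-t) * h t)"
    by (simp add: interval_lebesgue_integral_0_infty f_def)
  have "(LBINT t=0..\<infinity>. exp (-t) * h t) = (LBINT x=-\<infinity>..-0. exp (-(-x)) * h (-x))"
    by (rule interval_integral_reflect)
  also have "\<dots> = (LBINT x=-\<infinity>..0. f x)" by (simp add: f_def)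
  also have "\<dots> = (LBINT y=0..X. F y)" unfolding f_integral
    by (rule interval_integral_cong) (use F_eq X in \<open>auto simp: f_def einterval_def zero_ereal_def min_def max_def\<close>)
  finally show "(LBINT t=0..\<infinity>. exp (-t) * h t) = (LBINT y=0..X. F y)" .
qed

lemma nn_integral_Ioo_powr:
  fixes p X c :: real
  assumes p: "p > -1" and X: "0 < X" and c: "0 \<le> c"
  shows "(\<integral>\<^sup>+ y. ennreal (indicator {0<..<X} y * (c * y powr p)) \<partial>lborel)
           = ennreal (c * X powr (p + 1) / (p + 1))"
proof -
  have "((\<lambda>y. y powr p) has_integral (X powr (p + 1) / (p + 1))) {0..X}"
    using has_integral_powr_from_0[of p X] p X by simp
  then have "((\<lambda>y. c * y powr p) has_integral (c * (X powr (p + 1) / (p + 1)))) {0<..<X}"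
    unfolding has_integral_Icc_iff_Ioo by (rule has_integral_mult_right)
  from nn_integral_has_integral_lebesgue[OF _ this] show ?thesis
    using c by simp
qed

lemma interval_integral_power_series_sums:
  fixes a :: "nat \<Rightarrow> real" and S :: "real \<Rightarrow> real" and q X :: real
  assumes q: "q > -1" and X: "0 < X"
    and a_nonneg: "\<And>k. 0 \<le> a k"
    and S: "\<And>y. 0 < y \<Longrightarrow> y < X \<Longrightarrow> (\<lambda>k. a k * y ^ k) sums S y"
    and S_int: "set_integrable lborel {0<..<X} (\<lambda>y. y powr q * S y)"
  shows "(\<lambda>k. a k * X powr (q + real k + 1) / (q + real k + 1))
           sums (LBINT y=0..X. y powr q * S y)"
proof -
  define t where "t = (\<lambda>k. a k * X powr (q + real k + 1) / (q + real k + 1))"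
  let ?f = "\<lambda>y. indicator {0<..<X} y * (y powr q * S y)"
  have S_nonneg: "0 \<le> S y" if "0 < y" "y < X" for y
    by (rule sums_le[OF _ sums_zero S[OF that]]) (use a_nonneg that in auto)
  have integral_eq: "(LBINT y=0..X. y powr q * S y) = integral\<^sup>L lborel ?f"
  proof -
    have "einterval 0 (ereal X) = {0<..<X}"
      by (auto simp: einterval_def zero_ereal_def)
    then show ?thesis
      using X by (simp add: interval_lebesgue_integral_def set_lebesgue_integral_def zero_ereal_def)
  qed
  have "ennreal (LBINT y=0..X. y powr q * S y) = (\<integral>\<^sup>+ y. ?f y \<partial>lborel)"
    unfolding integral_eq using S_int
    by (intro nn_integral_eq_integral[symmetric]) (auto simp: indicator_def S_nonneg set_integrable_def)
  also have "\<dots> = (\<integral>\<^sup>+ y. (\<Sum>k. ennreal (indicator {0<..<X} y * (a k * y powr (q + real k)))) \<partial>lborel)"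
  proof (rule nn_integral_cong)
    fix y :: real
    show "ennreal (?f y) = (\<Sum>k. ennreal (indicator {0<..<X} y * (a k * y powr (q + real k))))"
    proof (cases "0 < y \<and> y < X")
      case True
      then have "(\<lambda>k. y powr q * (a k * y ^ k)) sums (y powr q * S y)"
        by (intro sums_mult S) auto
      moreover have "y powr q * (a k * y ^ k) = a k * y powr (q + real k)" for k
        using True by (simp add: powr_add powr_realpow)
      ultimately have sums: "(\<lambda>k. a k * y powr (q + real k)) sums (y powr q * S y)" by simp
      then have "(\<Sum>k. ennreal (a k * y powr (q + real k))) = ennreal (\<Sum>k. a k * y powr (q + real k))"
        by (intro suminf_ennreal2) (use a_nonneg in \<open>auto simp: sums_iff\<close>)
      then show ?thesis using True sums by (simp add: sums_iff)
    qed simp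
  qed
  also have "\<dots> = (\<Sum>k. \<integral>\<^sup>+ y. ennreal (indicator {0<..<X} y * (a k * y powr (q + real k))) \<partial>lborel)"
    by (rule nn_integral_suminf) measurable
  also have "\<dots> = (\<Sum>k. ennreal (t k))"
    using nn_integral_Ioo_powr[of "q + real k" X "a k" for k] q X a_nonneg
    by (simp add: t_def add.assoc)
  finally have "ennreal (LBINT y=0..X. y powr q * S y) = (\<Sum>k. ennreal (t k))" .
  then have "(\<lambda>k. ennreal (t k)) sums ennreal (LBINT y=0..X. y powr q * S y)"
    by (metis summableI summable_sums)
  moreover have "0 \<le> (LBINT y=0..X. y powr q * S y)"
    unfolding integral_eq by (rule integral_nonneg_AE) (auto simp: indicator_def S_nonneg)
  moreover have "0 \<le> t k" for k using a_nonneg q X by (simp add: t_def)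
  ultimately show ?thesis by (simp add: t_def)
qed

lemma set_integrable_incomplete_beta:
  fixes q \<alpha> x :: real
  assumes q: "0 \<le> q" and \<alpha>: "0 \<le> \<alpha>" and x: "x < 1"
  shows "set_integrable lborel {0<..<x} (\<lambda>y. y powr q * (1 - y) powr (-\<alpha>))"
proof (rule set_integrable_Ioo_bounded)
  fix y assume y: "0 < y" "y < x"
  have "y powr q \<le> 1" using y x q by (intro powr_le1) auto
  moreover have "(1 - y) powr (-\<alpha>) \<le> (1 - x) powr (-\<alpha>)"
    using y x \<alpha> by (intro powr_mono2') auto
  ultimately have "y powr q * (1 - y) powr (-\<alpha>) \<le> 1 * (1 - x) powr (-\<alpha>)"
    by (intro mult_mono) auto
  then show "\<bar>y powr q * (1 - y) powr (-\<alpha>)\<bar> \<le> (1 - x) powr (-\<alpha>)"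
    by simp
qed measurable

lemma incomplete_beta_sums:
  fixes q \<alpha> x :: real
  assumes q: "0 \<le> q" and \<alpha>: "0 < \<alpha>" and x: "0 < x" "x < 1"
  shows "(\<lambda>k. pochhammer \<alpha> k / fact k * x powr (q + real k + 1) / (q + real k + 1))
           sums (LBINT y=0..x. y powr q * (1 - y) powr (-\<alpha>))"
proof (rule interval_integral_power_series_sums)
  show "(\<lambda>k. pochhammer \<alpha> k / fact k * y ^ k) sums (1 - y) powr (-\<alpha>)"
    if "0 < y" "y < x" for y
    using that x by (intro binomial_series_pochhammer) auto
  show "0 \<le> pochhammer \<alpha> k / fact k" for k
    using \<alpha> by (simp add: pochhammer_nonneg)
qed (use assms set_integrable_incomplete_beta[of q \<alpha> x] in auto)

lemma incomplete_beta_geometric_sums: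
  fixes q b :: real
  assumes q: "0 \<le> q" and b: "0 < b" "b < 1"
  shows "(\<lambda>k. b ^ (k + 1) / (q + real k + 1))
           sums (b powr (-q) * (LBINT y=0..b. y powr q * (1 - y) powr (-1)))"
proof -
  have "b powr (-q) * (pochhammer 1 k / fact k * b powr (q + real k + 1) / (q + real k + 1))
          = b ^ (k + 1) / (q + real k + 1)" for k
  proof -
    have "b powr (-q) * b powr (q + real k + 1) = b powr (real (k + 1))"
      by (simp add: powr_add[symmetric] add.commute)
    also have "\<dots> = b ^ (k + 1)" using b(1) by (rule powr_realpow)
    finally show ?thesis by (simp add: pochhammer_fact[symmetric])
  qed
  with sums_mult[OF incomplete_beta_sums[OF q _ b, of 1], of "b powr (-q)"] show ?thesis
    by simp
qed

lemma laplace_transform_odds: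
  fixes b s :: real
  assumes b: "0 < b" "b < 1" and s: "0 < s"
  defines "h \<equiv> \<lambda>t. b * exp (- (s * t)) / (1 - b * exp (- (s * t)))"
  shows "set_integrable lborel {0<..} (\<lambda>t. exp (-t) * h t)"
    and "(LBINT t=0..\<infinity>. exp (-t) * h t)
           = b powr (- 1 / s) / s * (LBINT y=0..b. y powr (1 / s) * (1 - y) powr (-1))"
proof -
  define q where "q = 1 / s"
  \<comment> \<open>$t = -G(y)$ inverts the substitution $y = b e^{-st}$\<close>
  define G where "G = (\<lambda>y. (ln y - ln b) / s)"
  define F where "F = (\<lambda>y. b powr (-q) / s * (y powr q * (1 - y) powr (-1)))"
  have F_eq: "exp (G y) * h (- G y) * (1 / (s * y)) = F y" if y: "0 < y" "y < b" for y
  proof -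
    have "exp (- (s * - G y)) = y / b"
      using y b s by (simp add: G_def exp_diff)
    then have h_val: "h (- G y) = y / (1 - y)"
      using y b by (simp add: h_def)
    have exp_val: "exp (G y) = y powr q / b powr q"
    proof -
      have "G y = q * ln y - q * ln b"
        by (simp add: G_def q_def diff_divide_distrib)
      then show ?thesis using y b by (simp add: powr_def exp_diff)
    qed
    show ?thesis
      unfolding h_val exp_val F_def using y b s by (simp add: powr_minus_divide field_simps)
  qed
  have G_at_b: "(G \<longlongrightarrow> 0) (at_left b)"
  proof -
    have "(G \<longlongrightarrow> (ln b - ln b) / s) (at b)"
      unfolding G_def using b s by (intro tendsto_intros) auto
    then show ?thesis using tendsto_mono[OF at_le[OF subset_UNIV]] by simp
  qed
  have G_at_0: "filterlim G at_bot (at_right 0)"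
    unfolding G_def using filterlim_ln_plus_at_bot[OF tendsto_const s, of "- ln b"]
    by (simp add: add.commute)
  have F_int: "set_integrable lborel {0<..<b} F"
    unfolding F_def using set_integrable_incomplete_beta[of q 1 b] b s
    by (intro set_integrable_mult_right) (auto simp: q_def)
  have h_pos: "0 < h t" if "0 \<le> t" for t
  proof -
    have "b * exp (- (s * t)) < 1"
      using b s that by (smt (verit) exp_le_one_iff mult_left_le mult_nonneg_nonneg neg_0_le_iff_le)
    then show ?thesis using b by (simp add: h_def)
  qed
  have h_cont: "isCont h t" if "0 < t" for t
    using h_pos[of t] that b unfolding h_def by (auto intro!: continuous_intros)
  have G_deriv: "DERIV G y :> 1 / (s * y)" if "0 < y" for y
    using that s unfolding G_def by (auto intro!: derivative_eq_intros)
  have G_neg: "G y < 0" if "0 < y" "y < b" for y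
    using that s by (simp add: G_def divide_neg_pos)
  note subst = laplace_integral_substitution[where g="\<lambda>y. 1 / (s * y)",
      OF b(1) G_deriv _ _ G_neg h_cont _ G_at_0 G_at_b F_eq F_int]
  show "set_integrable lborel {0<..} (\<lambda>t. exp (-t) * h t)"
    using subst(1) h_pos s by (simp add: less_imp_le)
  have "(LBINT y=0..b. F y) = b powr (-q) / s * (LBINT y=0..b. y powr q * (1 - y) powr (-1))"
    unfolding F_def by (rule interval_lebesgue_integral_mult_right)
  with subst(2) h_pos s
  show "(LBINT t=0..\<infinity>. exp (-t) * h t)
          = b powr (- 1 / s) / s * (LBINT y=0..b. y powr (1 / s) * (1 - y) powr (-1))"
    by (simp add: q_def less_imp_le)
qed

lemma laplace_transform_logistic:
  fixes c s :: real
  assumes c: "0 < c" and s: "0 < s"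
  defines "h \<equiv> \<lambda>t. c * exp (- (s * t)) / (1 + c * exp (- (s * t)))"
  shows "set_integrable lborel {0<..} (\<lambda>t. exp (-t) * h t)"
    and "(LBINT t=0..\<infinity>. exp (-t) * h t)
           = c powr (- 1 / s) / s *
             (LBINT y=0..c / (1 + c). y powr (1 / s) * (1 - y) powr (- 1 / s - 1))"
proof -
  define q where "q = 1 / s"
  define x where "x = c / (1 + c)"
  have x: "0 < x" "x < 1" using c by (auto simp: x_def field_simps)
  \<comment> \<open>$t = -G(y)$ inverts the substitution $y = c e^{-st} / (1 + c e^{-st})$\<close>
  define G where "G = (\<lambda>y. (ln y - ln (1 - y) - ln c) / s)"
  define g where "g = (\<lambda>y. 1 / (s * y * (1 - y)))"
  define F where "F = (\<lambda>y. c powr (-q) / s * (y powr q * (1 - y) powr (- (q + 1))))"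
  have F_eq: "exp (G y) * h (- G y) * g y = F y" if y: "0 < y" "y < x" for y
  proof -
    have y1: "y < 1" using y x by simp
    have odds: "exp (- (s * - G y)) = y / ((1 - y) * c)"
      using y y1 c s by (simp add: G_def exp_diff)
    have h_val: "h (- G y) = y"
      unfolding h_def odds using y y1 c by (simp add: field_simps)
    have exp_val: "exp (G y) = y powr q / (1 - y) powr q / c powr q"
    proof -
      have "G y = q * ln y - q * ln (1 - y) - q * ln c"
        by (simp add: G_def q_def diff_divide_distrib)
      then show ?thesis using y y1 c by (simp add: powr_def exp_diff)
    qed
    have power_val: "(1 - y) powr (- (q + 1)) = 1 / ((1 - y) powr q * (1 - y))"
      unfolding powr_minus_divide powr_add using y1 by simp
    show ?thesis
      unfolding h_val exp_val F_def g_def power_val using y y1 c s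
      by (simp add: powr_minus_divide field_simps)
  qed
  have G_at_x: "(G \<longlongrightarrow> 0) (at_left x)"
  proof -
    have "ln x - ln (1 - x) - ln c = 0"
      using x c by (simp add: x_def ln_div field_simps)
    moreover have "(G \<longlongrightarrow> (ln x - ln (1 - x) - ln c) / s) (at x)"
      unfolding G_def using x s by (intro tendsto_intros) auto
    ultimately show ?thesis using tendsto_mono[OF at_le[OF subset_UNIV]] by simp
  qed
  have G_at_0: "filterlim G at_bot (at_right 0)"
  proof -
    have "((\<lambda>y. - ln (1 - y) - ln c) \<longlongrightarrow> - ln (1 - 0) - ln c) (at_right 0)"
      by (intro tendsto_intros) auto
    from filterlim_ln_plus_at_bot[OF this s] show ?thesis
      by (simp add: G_def algebra_simps)
  qed
  have F_int: "set_integrable lborel {0<..<x} F"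
    unfolding F_def using set_integrable_incomplete_beta[of q "q + 1" x] x s
    by (intro set_integrable_mult_right) (auto simp: q_def)
  have denominator_pos: "0 < 1 + c * exp (- (s * t))" for t
    using c by (simp add: add_pos_pos)
  have h_pos: "0 < h t" for t
    using c denominator_pos[of t] by (simp add: h_def)
  have h_cont: "isCont h t" for t
    unfolding h_def by (intro continuous_intros) (use denominator_pos[of t] in auto)
  have G_deriv: "DERIV G y :> g y" and g_cont: "isCont g y" if "0 < y" "y < 1" for y
    unfolding G_def g_def using that s
    by (auto intro!: derivative_eq_intros continuous_intros simp: field_simps)
  have G_neg: "G y < 0" if "0 < y" "y < x" for y
  proof -
    have y1: "y < 1" using that x by simp
    have "y / (1 - y) < c" using that y1 c by (simp add: x_def field_simps)
    then have "ln (y / (1 - y)) < ln c" using that y1 c by simp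
    then have "ln y - ln (1 - y) < ln c" using that y1 by (simp add: ln_div)
    then show "G y < 0" using s by (simp add: G_def divide_neg_pos)
  qed
  note subst = laplace_integral_substitution
      [OF x(1) G_deriv g_cont _ G_neg h_cont _ G_at_0 G_at_x F_eq F_int]
  show "set_integrable lborel {0<..} (\<lambda>t. exp (-t) * h t)"
    using subst(1) h_pos s x by (simp add: less_imp_le g_def)
  have "(LBINT y=0..x. F y) = c powr (-q) / s * (LBINT y=0..x. y powr q * (1 - y) powr (- (q + 1)))"
    unfolding F_def by (rule interval_lebesgue_integral_mult_right)
  with subst(2) h_pos s x
  show "(LBINT t=0..\<infinity>. exp (-t) * h t)
           = c powr (- 1 / s) / s *
             (LBINT y=0..c / (1 + c). y powr (1 / s) * (1 - y) powr (- 1 / s - 1))"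
    by (simp add: q_def x_def g_def less_imp_le)
qed

lemma expectation_exponential_odds:
  fixes M :: "'s measure" and tau :: "'s \<Rightarrow> real" and b s r K :: real
  assumes "prob_space M" and "distributed M lborel tau (exponential_density 1)"
    and b: "0 < b" "b < 1" and s: "0 < s"
  defines "E \<equiv> prob_space.expectation M
             (\<lambda>\<omega>. r + K * (b * exp (- (s * tau \<omega>)) / (1 - b * exp (- (s * tau \<omega>)))))"
  shows "E = r + K * b powr (- 1 / s) / s * (LBINT y=0..b. y powr (1 / s) * (1 - y) powr (-1))"
    and "E = r + K / s * (\<Sum>k. b ^ (k + 1) / (1 / s + real k + 1))"
proof -
  have "E = r + K * (LBINT t=0..\<infinity>. exp (-t) * (b * exp (- (s * t)) / (1 - b * exp (- (s * t)))))"
    unfolding E_def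
    by (rule expectation_exponential_affine[OF assms(1,2) _ laplace_transform_odds(1)[OF b s]])
       measurable
  then show integral_form:
    "E = r + K * b powr (- 1 / s) / s * (LBINT y=0..b. y powr (1 / s) * (1 - y) powr (-1))"
    unfolding laplace_transform_odds(2)[OF b s] by simp
  have "0 \<le> 1 / s" using s by simp
  then have series: "(\<Sum>k. b ^ (k + 1) / (1 / s + real k + 1))
                       = b powr (- (1 / s)) * (LBINT y=0..b. y powr (1 / s) * (1 - y) powr (-1))"
    using b by (intro sums_unique[symmetric] incomplete_beta_geometric_sums)
  show "E = r + K / s * (\<Sum>k. b ^ (k + 1) / (1 / s + real k + 1))"
    unfolding series integral_form using s by simp
qed

lemma expectation_exponential_logistic:
  fixes M :: "'s measure" and tau :: "'s \<Rightarrow> real" and c s r K :: real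
  assumes "prob_space M" and "distributed M lborel tau (exponential_density 1)"
    and c: "0 < c" and s: "0 < s"
  defines "E \<equiv> prob_space.expectation M
             (\<lambda>\<omega>. r + K * (c * exp (- (s * tau \<omega>)) / (1 + c * exp (- (s * tau \<omega>)))))"
  shows "E = r + K * c powr (- 1 / s) / s *
               (LBINT y=0..c / (1 + c). y powr (1 / s) * (1 - y) powr (- 1 / s - 1))"
    and "E = r + K * c powr (- 1 / s) / s *
               (\<Sum>k. pochhammer (1 / s + 1) k / fact k * (c / (1 + c)) powr (1 / s + real k + 1)
                     / (1 / s + real k + 1))"
proof -
  have "E = r + K * (LBINT t=0..\<infinity>. exp (-t) * (c * exp (- (s * t)) / (1 + c * exp (- (s * t)))))"
    unfolding E_def
    by (rule expectation_exponential_affine[OF assms(1,2) _ laplace_transform_logistic(1)[OF c s]])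
       measurable
  then show integral_form:
    "E = r + K * c powr (- 1 / s) / s *
           (LBINT y=0..c / (1 + c). y powr (1 / s) * (1 - y) powr (- 1 / s - 1))"
    unfolding laplace_transform_logistic(2)[OF c s] by simp
  have exponent: "- 1 / s - 1 = - (1 / s + 1)" by simp
  have series:
    "(\<Sum>k. pochhammer (1 / s + 1) k / fact k * (c / (1 + c)) powr (1 / s + real k + 1)
          / (1 / s + real k + 1))
       = (LBINT y=0..c / (1 + c). y powr (1 / s) * (1 - y) powr (- 1 / s - 1))"
    unfolding exponent
  proof (intro sums_unique[symmetric] incomplete_beta_sums)
    show "0 \<le> 1 / s" "0 < 1 / s + 1" using s by (simp_all add: add_pos_pos)
    show "0 < c / (1 + c)" "c / (1 + c) < 1" using c by (auto simp: field_simps)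
  qed
  show "E = r + K * c powr (- 1 / s) / s *
          (\<Sum>k. pochhammer (1 / s + 1) k / fact k * (c / (1 + c)) powr (1 / s + real k + 1)
                / (1 / s + real k + 1))"
    unfolding series by (fact integral_form)
qed

text \<open>$r_1, r_2$ are the roots of $x^2 - (1 - \phi) x - \phi p$, so that the ODE for $\chi$ reads
  $\dot\chi = -\frac{\beta}{2} (\chi - r_1) (\chi - r_2)$.\<close>

lemma characteristic_roots_bounds:
  fixes phi p :: real
  assumes phi: "0 < phi" and p: "0 < p" "p < 1"
  defines "D \<equiv> sqrt ((1 - phi)\<^sup>2 + 4 * phi * p)"
  shows "0 < (1 - phi + D) / 2" and "(1 - phi + D) / 2 < 1" and "(1 - phi - D) / 2 < 0"
proof -
  have "sqrt ((1 - phi)\<^sup>2) < D"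
    unfolding D_def using phi p by (intro real_sqrt_less_mono) simp
  then have D_lower: "\<bar>1 - phi\<bar> < D" by simp
  have "4 * phi * p < 4 * phi" using phi p by simp
  then have "D < sqrt ((1 + phi)\<^sup>2)"
    unfolding D_def by (intro real_sqrt_less_mono) (simp add: power2_eq_square algebra_simps)
  then have "D < 1 + phi" using phi by simp
  with D_lower show "0 < (1 - phi + D) / 2" and "(1 - phi + D) / 2 < 1" and "(1 - phi - D) / 2 < 0"
    by (auto simp: abs_if split: if_splits)
qed

theorem corollary2:
  fixes theta1 theta2 theta p beta phi r1 r2 a b c p11 p21 :: real
    and mu nu :: "real \<Rightarrow> real"
    and M :: "'s measure" and tau :: "'s \<Rightarrow> real"
  assumes "theta1 > 0" and "theta2 > 0"
    and "theta = theta1 + theta2" and "p = theta1 / theta"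
    and "beta > 0" and "phi = theta / beta"
    and "r1 = (1 - phi + sqrt ((1 - phi)\<^sup>2 + 4 * phi * p)) / 2"
    and "r2 = (1 - phi - sqrt ((1 - phi)\<^sup>2 + 4 * phi * p)) / 2"
    and "a = (r1 - r2) / 2" and "b = (1 - r1) / (1 - r2)" and "c = - r1 / r2"
    and "\<And>t. mu t = r1 + (r1 - r2) * (b * exp (- beta * (r1 - r2) * t / 2))
                        / (1 - b * exp (- beta * (r1 - r2) * t / 2))"
    and "\<And>t. nu t = r1 + (r1 - r2) * ((r1 / r2) * exp (- beta * (r1 - r2) * t / 2))
                        / (1 - (r1 / r2) * exp (- beta * (r1 - r2) * t / 2))"
    and "prob_space M"
    and "distributed M lborel tau (exponential_density 1)"
    and "p11 = prob_space.expectation M (\<lambda>\<omega>. mu (tau \<omega>))"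
    and "p21 = prob_space.expectation M (\<lambda>\<omega>. nu (tau \<omega>))"
  shows "p11 = r1 + 2 * b powr (- 1 / (a * beta)) / beta *
                 (LBINT y=0..b. y powr (1 / (a * beta)) * (1 - y) powr (-1))
       \<and> p11 = r1 + 2 / beta * (\<Sum>k. b ^ (k + 1) / (1 / (a * beta) + real k + 1))
       \<and> p21 = r1 - 2 * c powr (- 1 / (a * beta)) / beta *
                 (LBINT y=0..c / (1 + c). y powr (1 / (a * beta)) * (1 - y) powr (- 1 / (a * beta) - 1))
       \<and> p21 = r1 - 2 * c powr (- 1 / (a * beta)) / beta *
                 (\<Sum>k. pochhammer ((a * beta + 1) / (a * beta)) k / fact k
                       * (c / (1 + c)) powr (1 / (a * beta) + real k + 1)
                       / (1 / (a * beta) + real k + 1))"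
proof -
  have "0 < p" "p < 1" "0 < phi"
    using assms(1-6) by simp_all
  then have r1: "0 < r1" "r1 < 1" and r2: "r2 < 0"
    using characteristic_roots_bounds unfolding assms(7,8) by blast+
  define s where "s = a * beta"
  have s: "0 < s" and scale: "r1 - r2 = 2 / beta * s"
    using r1 r2 assms(5,9) by (auto simp: s_def)
  have b: "0 < b" "b < 1" and c: "0 < c"
    using r1 r2 by (auto simp: assms(10,11) divide_pos_neg)
  have rate: "exp (- beta * (r1 - r2) * t / 2) = exp (- (s * t))" for t
    using assms(5) by (simp add: scale field_simps)
  have mu: "mu t = r1 + (r1 - r2) * (b * exp (- (s * t)) / (1 - b * exp (- (s * t))))" for t
    by (simp add: assms(12) rate[symmetric])
  have nu: "nu t = r1 + - (r1 - r2) * (c * exp (- (s * t)) / (1 + c * exp (- (s * t))))" for t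
  proof -
    have "0 < 1 + c * exp (- (s * t))" using c by (simp add: add_pos_pos)
    then show ?thesis using r2 unfolding assms(13) rate by (simp add: assms(11) field_simps)
  qed
  note p11 = expectation_exponential_odds[OF assms(14,15) b s, of r1 "r1 - r2",
      folded mu assms(16)]
  note p21 = expectation_exponential_logistic[OF assms(14,15) c s, of r1 "- (r1 - r2)",
      folded nu assms(17)]
  have "(s + 1) / s = 1 / s + 1"
    using s by (simp add: add_divide_distrib)
  then show ?thesis
    unfolding s_def[symmetric] using p11 p21 s by (simp add: scale)
qed

end
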